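(* Let $\alpha\in\mathbb{R}$ be fixed and let $\phi\colon\, ]0,+\infty[\,\to\mathbb{R}$ be a function such that (a) $\phi$ is $\mathbb{Q}$-homogeneous of order $\alpha$, i.e. $\phi(rx)=r^{\alpha}\phi(x)$ for all $x\in\,]0,+\infty[$ and all $r\in\mathbb{Q}\cap\,]0,+\infty[$; and (b) $\phi$ is continuous at some point of $]0,+\infty[$. Then $\phi$ is continuous at every point of $]0,+\infty[$. *)

theory Defs
  imports "HOL-Analysis.Analysis"
begin

end

theory Submission
  imports Defs
begin

text \<open>Dividing by \<open>x powr \<alpha>\<close> turns \<open>\<phi>\<close> into a function invariant under positive rational
  scalings. Such a function is constant wherever it is continuous at one point, because the
  rational multiples of any \<open>z > 0\<close> accumulate at that point. Hence \<open>\<phi> x = c * x powr \<alpha>\<close>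
  on \<open>]0,\<infinity>[\<close>, which is continuous.\<close>

lemma closure_pos_Rats: "closure ({0<..} \<inter> \<rat>) = {0::real..}"
  using closure_open_Int_superset[of "{0<..}" "\<rat> :: real set"]
  by (simp add: Rats_closure_real)

lemma rat_scaling_invariant_imp_const:
  fixes g :: "real \<Rightarrow> 'a::t2_space"
  assumes inv: "\<And>z q. z > 0 \<Longrightarrow> q \<in> \<rat> \<Longrightarrow> q > 0 \<Longrightarrow> g (q * z) = g z"
    and x0: "x0 > 0" and cont: "continuous (at x0 within {0<..}) g"
    and z: "z > 0"
  shows "g z = g x0"
proof -
  have "x0 / z \<in> closure ({0<..} \<inter> \<rat>)"
    using x0 z by (simp add: closure_pos_Rats)
  then obtain q where q: "\<And>n. q n \<in> {0<..} \<inter> \<rat>" and lim_q: "q \<longlonglongrightarrow> x0 / z"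
    by (meson closure_sequential)
  have "(\<lambda>n. q n * z) \<longlonglongrightarrow> x0 / z * z"
    using lim_q by (intro tendsto_intros)
  then have "(\<lambda>n. q n * z) \<longlonglongrightarrow> x0"
    using z by simp
  moreover have "\<And>n. q n * z \<in> {0<..}"
    using q z by simp
  ultimately have "(\<lambda>n. g (q n * z)) \<longlonglongrightarrow> g x0"
    using cont by (simp add: continuous_within_sequentially comp_def)
  moreover have "(\<lambda>n. g (q n * z)) = (\<lambda>n. g z)"
    using q z inv by auto
  ultimately have "(\<lambda>n. g z) \<longlonglongrightarrow> g x0"
    by simp
  then show ?thesis
    by (rule LIMSEQ_const_iff[THEN iffD1])
qed

theorem mainTheorem1:
  fixes \<alpha> :: real and \<phi> :: "real \<Rightarrow> real"
  assumes hom: "\<And>x r. x > 0 \<Longrightarrow> r \<in> \<rat> \<Longrightarrow> r > 0 \<Longrightarrow> \<phi> (r * x) = r powr \<alpha> * \<phi> x"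
    and cont: "\<exists>x0 > 0. continuous (at x0 within {0<..}) \<phi>"
  shows "\<forall>x > 0. continuous (at x within {0<..}) \<phi>"
proof (intro allI impI)
  fix x :: real assume x: "x > 0"
  obtain x0 where x0: "x0 > 0" "continuous (at x0 within {0<..}) \<phi>"
    using cont by blast
  define g where "g z = \<phi> z / z powr \<alpha>" for z
  have g_inv: "g (q * z) = g z" if "z > 0" "q \<in> \<rat>" "q > 0" for q z
    using hom[OF that] that by (simp add: g_def powr_mult)
  have g_cont: "continuous (at x0 within {0<..}) g"
    unfolding g_def using x0 by (intro continuous_intros) auto
  have \<phi>_eq: "\<phi> z = z powr \<alpha> * g x0" if "z \<in> {0<..}" for z
  proof -
    have "g z = g x0"
      using rat_scaling_invariant_imp_const[OF g_inv x0(1) g_cont] that by simp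
    moreover have "\<phi> z = z powr \<alpha> * g z"
      using that by (simp add: g_def)
    ultimately show ?thesis
      by simp
  qed
  have "continuous (at x within {0<..}) (\<lambda>z. z powr \<alpha> * g x0)"
    using x by (intro continuous_intros) auto
  then show "continuous (at x within {0<..}) \<phi>"
    by (rule continuous_transform_within_openin[where S="{0<..}"]) (use \<phi>_eq x in auto)
qed

end
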